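(* Let $w\in\{a,b\}^*$ (with $a\ne b$) satisfy $|w|>7$ and $l(w)=6$. Let $T=\{ab^2aba^2b,\ abab^2a^2b,\ ababa^2b^2,\ a^2bab^2ab,\ a^2babab^2,\ aba^2b^2ab\}\cup\{a^{n_1}babab : n_1\ge3\}$. Then every element of $\mathtt{BR}(w)$ is rich if and only if $w$ or its complement $w^c$ belongs to $\{u,\ (u^c)^R : u\in T\}$.
   Context: For a word $w=w_1\cdots w_n$, $|w|=n$, $w^R=w_n\cdots w_1$; $w$ is a palindrome if $w=w^R$; a factor of $w$ is a word $u$ with $w=puq$. A word $w$ is rich if the number of distinct nonempty palindromic factors of $w$ equals $|w|$. The block reversal of a nonempty word $w$ is $\mathtt{BR}(w)=\{B_t\cdots B_1 : w=B_1\cdots B_t,\ t\ge1,\ \text{each } B_i \text{ nonempty}\}$. Every nonempty word has a unique run-length encoding $w=c_1^{n_1}\cdots c_k^{n_k}$ with letters $c_i\neq c_{i+1}$, $n_i\ge1$; $l(w)=k$. The complement $u^c$ of $u\in\{a,b\}^*$ is obtained by exchanging $a$ and $b$. *)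

theory Defs
  imports Main
begin

definition factors :: "'a list \<Rightarrow> 'a list set" where
  "factors w = {u. \<exists>p q. w = p @ u @ q}"

definition palindrome :: "'a list \<Rightarrow> bool" where
  "palindrome u \<longleftrightarrow> u = rev u"

definition rich :: "'a list \<Rightarrow> bool" where
  "rich w \<longleftrightarrow> card {u \<in> factors w. u \<noteq> [] \<and> palindrome u} = length w"

definition BR :: "'a list \<Rightarrow> 'a list set" where
  "BR w = {concat (rev Bs) | Bs. Bs \<noteq> [] \<and> (\<forall>B \<in> set Bs. B \<noteq> []) \<and> concat Bs = w}"

definition rle :: "'a list \<Rightarrow> ('a \<times> nat) list \<Rightarrow> bool" where
  "rle w cs \<longleftrightarrow> concat (map (\<lambda>(c, n). replicate n c) cs) = w
     \<and> (\<forall>p \<in> set cs. snd p \<ge> 1)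
     \<and> (\<forall>i. Suc i < length cs \<longrightarrow> fst (cs ! i) \<noteq> fst (cs ! Suc i))"

(* l(w): number of runs of the (unique) run-length encoding *)
definition runs :: "'a list \<Rightarrow> nat" where
  "runs w = length (THE cs. rle w cs)"

definition swap_ab :: "'a \<Rightarrow> 'a \<Rightarrow> 'a \<Rightarrow> 'a" where
  "swap_ab a b x = (if x = a then b else if x = b then a else x)"

definition compl :: "'a \<Rightarrow> 'a \<Rightarrow> 'a list \<Rightarrow> 'a list" where
  "compl a b u = map (swap_ab a b) u"

definition T_set :: "'a \<Rightarrow> 'a \<Rightarrow> 'a list set" where
  "T_set a b =
     {[a,b,b,a,b,a,a,b], [a,b,a,b,b,a,a,b], [a,b,a,b,a,a,b,b],
      [a,a,b,a,b,b,a,b], [a,a,b,a,b,a,b,b], [a,b,a,a,b,b,a,b]}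
   \<union> {replicate n1 a @ [b,a,b,a,b] | n1. n1 \<ge> 3}"

definition T_closure :: "'a \<Rightarrow> 'a \<Rightarrow> 'a list set" where
  "T_closure a b = T_set a b \<union> (\<lambda>u. rev (compl a b u)) ` T_set a b"

end

(*
  A binary word with six runs is a^n1 b^n2 a^n3 b^n4 a^n5 b^n6 up to exchanging a and b, and
  whether all its block reversals are rich depends only on the exponent vector, up to reversing
  it (reversal maps block reversals to block reversals and preserves richness).  Richness is
  tested through the fact that appending a letter creates at most one new palindromic factor, so
  a word is rich iff each of its nonempty prefixes ends in a palindrome that does not occur
  earlier.

  If the exponent vector is not one of those listed in T, then it or its reverse matches one of
  13 patterns, each of which gives a block reversal containing one of five short non-rich words.
  Conversely, the block reversals of the six sporadic words of T are checked by evaluation, and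
  every block reversal of a^n b a b a b is a suffix of a word in one of five parametric families
  with three b's each; these are shown rich by growing them letter by letter, reading off the
  new palindrome from the exponents.
*)

theory Submission
  imports Defs "HOL-Library.Sublist"
begin

section \<open>Palindromic factors and richness\<close>

lemma factors_eq_sublist: "factors w = {u. sublist u w}"
  by (auto simp: factors_def sublist_def)

definition pal_factors :: "'a list \<Rightarrow> 'a list set" where
  "pal_factors w = {u. sublist u w \<and> u \<noteq> [] \<and> palindrome u}"

lemma rich_iff_card_pal_factors: "rich w \<longleftrightarrow> card (pal_factors w) = length w"
  by (simp add: rich_def pal_factors_def factors_eq_sublist)

lemma finite_pal_factors: "finite (pal_factors w)"
  by (rule finite_subset[of _ "set (sublists w)"]) (auto simp: pal_factors_def)

definition new_pal_suffixes :: "'a list \<Rightarrow> 'a \<Rightarrow> 'a list set" where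
  "new_pal_suffixes w c = {s. suffix s (w @ [c]) \<and> s \<noteq> [] \<and> palindrome s \<and> \<not> sublist s w}"

lemma pal_factors_snoc: "pal_factors (w @ [c]) = pal_factors w \<union> new_pal_suffixes w c"
  by (auto simp: pal_factors_def new_pal_suffixes_def sublist_snoc simp del: suffix_snoc)

lemma pal_factors_Int_new_pal_suffixes: "pal_factors w \<inter> new_pal_suffixes w c = {}"
  by (auto simp: pal_factors_def new_pal_suffixes_def)

lemma finite_new_pal_suffixes: "finite (new_pal_suffixes w c)"
  using finite_pal_factors[of "w @ [c]"] by (simp add: pal_factors_snoc)

lemma palindrome_suffix_sublist_butlast:
  assumes "palindrome s" "palindrome s'" "suffix s s'" "s \<noteq> s'"
  shows "sublist s (butlast s')"
proof -
  obtain t where t: "s' = t @ s" "t \<noteq> []" using assms(3,4) by (auto simp: suffix_def)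
  have "s' = s @ rev t" using t(1) assms(1,2) by (metis palindrome_def rev_append)
  then have "butlast s' = s @ butlast (rev t)" using t(2) by (simp add: butlast_append)
  then show ?thesis by (metis prefix_imp_sublist prefixI)
qed

text \<open>A shorter palindromic suffix of a palindromic suffix reappears as its prefix, hence in \<open>w\<close>.\<close>

lemma new_pal_suffixes_unique:
  assumes "s \<in> new_pal_suffixes w c" "s' \<in> new_pal_suffixes w c"
  shows "s = s'"
proof -
  have butlast_suffix: "suffix (butlast u) w" if "u \<in> new_pal_suffixes w c" for u
  proof -
    have "suffix u (w @ [c])" "u \<noteq> []"
      using that by (simp_all add: new_pal_suffixes_def del: suffix_snoc)
    then obtain zs where "w @ [c] = zs @ u" "u \<noteq> []" by (auto elim: suffixE)
    then have "butlast (w @ [c]) = butlast (zs @ u)" by simp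
    then have "w = zs @ butlast u" using \<open>u \<noteq> []\<close> by (simp add: butlast_append)
    then show ?thesis by (simp add: suffix_def)
  qed
  have False if "u \<in> new_pal_suffixes w c" "u' \<in> new_pal_suffixes w c" "suffix u u'" "u \<noteq> u'"
    for u u'
  proof -
    have "sublist u (butlast u')"
      using that by (intro palindrome_suffix_sublist_butlast) (simp_all add: new_pal_suffixes_def)
    then have "sublist u w"
      using butlast_suffix[OF that(2)]
      by (blast intro: sublist_order.order.trans suffix_imp_sublist)
    then show False using that(1) by (simp add: new_pal_suffixes_def)
  qed
  moreover have "suffix s s' \<or> suffix s' s"
    using assms suffix_same_cases unfolding new_pal_suffixes_def by blast
  ultimately show ?thesis using assms by blast
qed

lemma card_new_pal_suffixes_le: "card (new_pal_suffixes w c) \<le> 1"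
  using card_le_Suc0_iff_eq[OF finite_new_pal_suffixes] new_pal_suffixes_unique by fastforce

lemma card_pal_factors_snoc:
  "card (pal_factors (w @ [c])) = card (pal_factors w) + card (new_pal_suffixes w c)"
  unfolding pal_factors_snoc
  by (rule card_Un_disjoint[OF finite_pal_factors finite_new_pal_suffixes
        pal_factors_Int_new_pal_suffixes])

lemma card_pal_factors_le: "card (pal_factors w) \<le> length w"
proof (induction w rule: rev_induct)
  case Nil then show ?case by (simp add: pal_factors_def)
next
  case (snoc c w) then show ?case
    using card_pal_factors_snoc[of w c] card_new_pal_suffixes_le[of w c] by simp
qed

lemma rich_snoc_iff: "rich (w @ [c]) \<longleftrightarrow> rich w \<and> new_pal_suffixes w c \<noteq> {}"
proof -
  have "card (new_pal_suffixes w c) = (if new_pal_suffixes w c = {} then 0 else 1)"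
    using card_new_pal_suffixes_le[of w c] card_0_eq[OF finite_new_pal_suffixes[of w c]] by auto
  then show ?thesis
    using card_pal_factors_snoc[of w c] card_pal_factors_le[of w]
    by (auto simp: rich_iff_card_pal_factors)
qed

lemma rich_snocI:
  assumes "rich w" "suffix s (w @ [c])" "s \<noteq> []" "palindrome s" "\<not> sublist s w"
  shows "rich (w @ [c])"
  using assms by (auto simp: rich_snoc_iff new_pal_suffixes_def simp del: suffix_snoc)

lemma rich_Nil: "rich []"
  by (simp add: rich_iff_card_pal_factors pal_factors_def)

lemma rich_prefix: "prefix u w \<Longrightarrow> rich w \<Longrightarrow> rich u"
proof (induction w rule: rev_induct)
  case (snoc c w) then show ?case by (auto simp: rich_snoc_iff)
qed simp

lemma palindrome_rev [simp]: "palindrome (rev u) \<longleftrightarrow> palindrome u"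
  unfolding palindrome_def by auto

lemma pal_factors_rev: "pal_factors (rev w) = rev ` pal_factors w"
proof (rule set_eqI)
  fix u
  have "u \<in> pal_factors (rev w) \<longleftrightarrow> rev u \<in> pal_factors w"
    by (simp add: pal_factors_def sublist_rev_right)
  then show "u \<in> pal_factors (rev w) \<longleftrightarrow> u \<in> rev ` pal_factors w"
    by (metis image_iff rev_rev_ident)
qed

lemma rich_rev [simp]: "rich (rev w) \<longleftrightarrow> rich w"
  by (simp add: rich_iff_card_pal_factors pal_factors_rev card_image)

lemma rich_suffix: "suffix u w \<Longrightarrow> rich w \<Longrightarrow> rich u"
  by (metis rich_prefix rich_rev suffix_to_prefix)

lemma rich_sublist: "sublist u w \<Longrightarrow> rich w \<Longrightarrow> rich u"
  by (metis rich_prefix rich_suffix sublist_altdef)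

lemma rich_ConsI:
  assumes "rich w" "prefix s (c # w)" "s \<noteq> []" "palindrome s" "\<not> sublist s w"
  shows "rich (c # w)"
proof -
  have "rich (rev w @ [c])"
    using assms by (intro rich_snocI[of _ "rev s"]) (auto simp: suffix_to_prefix sublist_rev_left)
  then show ?thesis by (metis rev.simps(2) rich_rev)
qed

lemma rich_map:
  assumes "inj_on f (set w)"
  shows "rich (map f w) \<longleftrightarrow> rich w"
proof -
  have inj: "inj_on f (set u)" if "sublist u w" for u
    using that assms inj_on_subset set_mono_sublist by blast
  have pal: "palindrome (map f u) \<longleftrightarrow> palindrome u" if "sublist u w" for u
    using inj_on_map_eq_map[of f u "rev u"] inj[OF that] by (simp add: palindrome_def rev_map)
  have "pal_factors (map f w) = map f ` pal_factors w"
  proof (rule set_eqI)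
    fix v
    have "v \<in> pal_factors (map f w) \<longleftrightarrow> (\<exists>u. sublist u w \<and> v = map f u \<and> u \<noteq> [] \<and> palindrome u)"
    proof
      assume "v \<in> pal_factors (map f w)"
      then have v: "sublist v (map f w)" "v \<noteq> []" "palindrome v" by (simp_all add: pal_factors_def)
      then obtain u where "sublist u w" "v = map f u" using sublist_map_rightE by blast
      with v pal show "\<exists>u. sublist u w \<and> v = map f u \<and> u \<noteq> [] \<and> palindrome u" by auto
    next
      assume "\<exists>u. sublist u w \<and> v = map f u \<and> u \<noteq> [] \<and> palindrome u"
      then show "v \<in> pal_factors (map f w)"
        using pal map_mono_sublist by (auto simp: pal_factors_def)
    qed
    then show "v \<in> pal_factors (map f w) \<longleftrightarrow> v \<in> map f ` pal_factors w"
      by (auto simp: pal_factors_def)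
  qed
  moreover have "inj_on (map f) (pal_factors w)"
  proof (rule inj_onI)
    fix x y assume xy: "x \<in> pal_factors w" "y \<in> pal_factors w" "map f x = map f y"
    then have "set x \<union> set y \<subseteq> set w" by (auto simp: pal_factors_def dest: set_mono_sublist)
    then show "x = y" using xy(3) inj_on_map_eq_map inj_on_subset[OF assms] by blast
  qed
  ultimately show ?thesis by (simp add: rich_iff_card_pal_factors card_image)
qed

definition has_new_pal_suffix :: "'a list \<Rightarrow> bool" where
  "has_new_pal_suffix u \<longleftrightarrow>
     list_ex (\<lambda>s. s \<noteq> [] \<and> s = rev s \<and> \<not> sublist s (butlast u)) (suffixes u)"

lemma rich_iff_prefixes: "rich w \<longleftrightarrow> list_all has_new_pal_suffix (tl (prefixes w))"
proof (induction w rule: rev_induct)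
  case Nil then show ?case by (simp add: rich_Nil)
next
  case (snoc c w)
  have "new_pal_suffixes w c \<noteq> {} \<longleftrightarrow> has_new_pal_suffix (w @ [c])"
    by (auto simp: new_pal_suffixes_def has_new_pal_suffix_def list_ex_iff palindrome_def
        simp del: suffix_snoc suffixes_snoc)
  moreover have "tl (prefixes (w @ [c])) = tl (prefixes w) @ [w @ [c]]"
    by (simp add: tl_append2)
  ultimately show ?case using snoc by (simp add: rich_snoc_iff)
qed

lemma rich_bool_word:
  assumes "a \<noteq> b"
  shows "rich (map (\<lambda>x. if x then a else b) bs) \<longleftrightarrow> list_all has_new_pal_suffix (tl (prefixes bs))"
  using assms by (subst rich_map) (auto simp: inj_on_def rich_iff_prefixes)

lemma not_rich_small_words:
  assumes "a \<noteq> b"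
  shows "\<not> rich [a, a, b, a, b, b, a, a]" "\<not> rich [a, a, b, b, a, b, a, a]"
    "\<not> rich [b, a, b, b, a, a, b, a, b]" "\<not> rich [b, b, a, a, b, a, b, b]"
    "\<not> rich [b, b, a, b, a, a, b, b]"
  subgoal
    by (subst rich_bool_word[OF assms, of "[True, True, False, True, False, False, True, True]",
          simplified]) code_simp
  subgoal
    by (subst rich_bool_word[OF assms, of "[True, True, False, False, True, False, True, True]",
          simplified]) code_simp
  subgoal
    by (subst rich_bool_word[OF assms,
          of "[False, True, False, False, True, True, False, True, False]", simplified]) code_simp
  subgoal
    by (subst rich_bool_word[OF assms, of "[False, False, True, True, False, True, False, False]",
          simplified]) code_simp
  subgoal
    by (subst rich_bool_word[OF assms, of "[False, False, True, False, True, True, False, False]",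
          simplified]) code_simp
  done

section \<open>Block reversals\<close>

fun block_partitions :: "'a list \<Rightarrow> 'a list list list" where
  "block_partitions [] = []"
| "block_partitions [x] = [[[x]]]"
| "block_partitions (x # y # ys) =
     concat (map (\<lambda>Bs. [[x] # Bs, (x # hd Bs) # tl Bs]) (block_partitions (y # ys)))"

lemma set_block_partitions:
  "set (block_partitions w) = {Bs. Bs \<noteq> [] \<and> (\<forall>B\<in>set Bs. B \<noteq> []) \<and> concat Bs = w}"
proof (induction w rule: block_partitions.induct)
  case 1 show ?case by simp (metis list.set_sel(1))
next
  case 2
  have "Bs = [[x]]" if P: "Bs \<noteq> []" "\<forall>B\<in>set Bs. B \<noteq> []" "concat Bs = [x]"
    for Bs and x :: 'a
  proof -
    obtain B R where BR: "Bs = B # R" using P(1) by (cases Bs) auto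
    with P have "B = [x]" "concat R = []" by (auto simp: append_eq_Cons_conv)
    with P BR show ?thesis by (cases R) auto
  qed
  then show ?case by auto
next
  case (3 x y ys)
  let ?P = "\<lambda>w Bs. Bs \<noteq> [] \<and> (\<forall>B\<in>set Bs. B \<noteq> []) \<and> concat Bs = w"
  have "?P (x # y # ys) Bs \<longleftrightarrow> (\<exists>Cs. ?P (y # ys) Cs \<and> (Bs = [x] # Cs \<or> Bs = (x # hd Cs) # tl Cs))"
    for Bs
  proof
    assume P: "?P (x # y # ys) Bs"
    then obtain B Cs where Bs: "Bs = (x # B) # Cs" by (cases Bs; cases "hd Bs") auto
    show "\<exists>Cs. ?P (y # ys) Cs \<and> (Bs = [x] # Cs \<or> Bs = (x # hd Cs) # tl Cs)"
    proof (cases "B = []")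
      case True then show ?thesis using P Bs by (intro exI[of _ Cs]) auto
    next
      case False then show ?thesis using P Bs by (intro exI[of _ "B # Cs"]) auto
    qed
  next
    assume "\<exists>Cs. ?P (y # ys) Cs \<and> (Bs = [x] # Cs \<or> Bs = (x # hd Cs) # tl Cs)"
    then show "?P (x # y # ys) Bs" by (auto simp: neq_Nil_conv)
  qed
  then show ?case using 3 by auto
qed

lemma BR_eq_block_partitions: "BR w = (\<lambda>Bs. concat (rev Bs)) ` set (block_partitions w)"
  unfolding BR_def set_block_partitions by blast

lemma block_partitions_map: "block_partitions (map f w) = map (map (map f)) (block_partitions w)"
proof (induction w rule: block_partitions.induct)
  case (3 x y ys)
  have "hd (map (map f) Bs) = map f (hd Bs)" if "Bs \<in> set (block_partitions (y # ys))" for Bs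
    using that by (simp add: set_block_partitions hd_map)
  then show ?case using 3 by (simp add: map_concat comp_def map_tl cong: map_cong)
qed simp_all

lemma BR_map: "BR (map f w) = map f ` BR w"
  unfolding BR_eq_block_partitions block_partitions_map set_map image_image
  by (simp add: map_concat rev_map)

lemma BR_rev:
  assumes "v \<in> BR w"
  shows "rev v \<in> BR (rev w)"
proof -
  obtain Bs where "v = concat (rev Bs)" "Bs \<noteq> []" "\<forall>B\<in>set Bs. B \<noteq> []" "concat Bs = w"
    using assms unfolding BR_def by blast
  then show ?thesis unfolding BR_def
    by (intro CollectI exI[of _ "rev (map rev Bs)"]) (auto simp: rev_concat rev_map)
qed

lemma all_rich_BR_rev: "(\<forall>v\<in>BR (rev w). rich v) \<longleftrightarrow> (\<forall>v\<in>BR w. rich v)"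
  by (metis BR_rev rev_rev_ident rich_rev)

lemma all_rich_BR_bool_word:
  assumes "a \<noteq> b"
    and "list_all (\<lambda>Bs. list_all has_new_pal_suffix (tl (prefixes (concat (rev Bs)))))
      (block_partitions bs)"
  shows "\<forall>v\<in>BR (map (\<lambda>x. if x then a else b) bs). rich v"
  using assms unfolding BR_map unfolding BR_eq_block_partitions
  by (auto simp: list_all_iff rich_bool_word)

text \<open>Cutting \<open>w\<close> into the blocks \<open>X, C G, M, G' A, Y\<close> and reversing their order brings
  \<open>A M C\<close> together as a factor.\<close>

lemma BR_witness:
  assumes "w = X @ C @ G @ M @ G' @ A @ Y" "C \<noteq> []" "A \<noteq> []" "\<not> rich (A @ M @ C)"
  shows "\<exists>v\<in>BR w. \<not> rich v"
proof -
  have concat_filter: "concat (filter (\<lambda>B. B \<noteq> []) L) = concat L" for L :: "'a list list"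
    by (induction L) auto
  define Bs where "Bs = filter (\<lambda>B. B \<noteq> []) [X, C @ G, M, G' @ A, Y]"
  have "Bs \<noteq> []" "\<forall>B\<in>set Bs. B \<noteq> []" "concat Bs = w"
    using assms(1,2) by (simp_all add: Bs_def concat_filter)
  then have "concat (rev Bs) \<in> BR w" unfolding BR_def by blast
  moreover have "concat (rev Bs) = (Y @ G') @ (A @ M @ C) @ (G @ X)"
    unfolding Bs_def rev_filter[symmetric] concat_filter by simp
  ultimately show ?thesis
    using assms(4) rich_sublist[of "A @ M @ C"] by (metis sublist_appendI)
qed

section \<open>Words as exponent lists\<close>

fun sep_word :: "'a \<Rightarrow> 'a \<Rightarrow> nat list \<Rightarrow> 'a list" where
  "sep_word a b [] = []"
| "sep_word a b [e] = replicate e a"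
| "sep_word a b (e # e' # es) = replicate e a @ b # sep_word a b (e' # es)"

fun exps_prefix :: "nat list \<Rightarrow> nat list \<Rightarrow> bool" where
  "exps_prefix [] es \<longleftrightarrow> True"
| "exps_prefix [f] [] \<longleftrightarrow> False"
| "exps_prefix [f] (e # es) \<longleftrightarrow> f \<le> e"
| "exps_prefix (f # f' # fs) [] \<longleftrightarrow> False"
| "exps_prefix (f # f' # fs) (e # es) \<longleftrightarrow> f = e \<and> exps_prefix (f' # fs) es"

fun exps_sublist :: "nat list \<Rightarrow> nat list \<Rightarrow> bool" where
  "exps_sublist fs [] \<longleftrightarrow> False"
| "exps_sublist [] (e # es) \<longleftrightarrow> True"
| "exps_sublist [f] (e # es) \<longleftrightarrow> f \<le> e \<or> exps_sublist [f] es"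
| "exps_sublist (f # f' # fs) (e # es) \<longleftrightarrow>
     f \<le> e \<and> exps_prefix (f' # fs) es \<or> exps_sublist (f # f' # fs) es"

lemma sep_word_Cons: "es \<noteq> [] \<Longrightarrow> sep_word a b (e # es) = replicate e a @ b # sep_word a b es"
  by (cases es) auto

lemma sep_word_append:
  "xs \<noteq> [] \<Longrightarrow> ys \<noteq> [] \<Longrightarrow> sep_word a b (xs @ ys) = sep_word a b xs @ b # sep_word a b ys"
proof (induction xs)
  case (Cons x xs) then show ?case by (cases "xs = []") (simp_all add: sep_word_Cons)
qed simp

lemma rev_sep_word: "rev (sep_word a b es) = sep_word a b (rev es)"
proof (induction es)
  case (Cons e es) then show ?case
    by (cases "es = []") (simp_all add: sep_word_Cons sep_word_append[of _ "[e]", simplified])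
qed simp

lemma palindrome_sep_word: "rev fs = fs \<Longrightarrow> palindrome (sep_word a b fs)"
  unfolding palindrome_def by (metis rev_sep_word)

lemma replicate_Cons_eq_iff:
  assumes "a \<noteq> b"
  shows "replicate f a @ b # X = replicate j a @ b # Y \<longleftrightarrow> f = j \<and> X = Y"
proof
  show "replicate f a @ b # X = replicate j a @ b # Y \<Longrightarrow> f = j \<and> X = Y"
  proof (induction f arbitrary: j)
    case 0 then show ?case using assms by (cases j) auto
  next
    case (Suc f) then show ?case using assms by (cases j) auto
  qed
qed simp

lemma sep_word_eq_replicate_Cons:
  assumes "a \<noteq> b" "sep_word a b fs = replicate j a @ b # y"
  shows "\<exists>fs'. fs = j # fs' \<and> fs' \<noteq> [] \<and> y = sep_word a b fs'"
proof (cases fs)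
  case (Cons f fs')
  have "b \<in> set (sep_word a b fs)" using assms(2) by simp
  then have "fs' \<noteq> []" using assms(1) Cons by auto
  then show ?thesis using assms Cons replicate_Cons_eq_iff[OF assms(1)] by (simp add: sep_word_Cons)
qed (use assms in simp)

lemma sep_word_eq_replicate_iff:
  assumes "a \<noteq> b" "fs \<noteq> []"
  shows "sep_word a b fs = replicate j a \<longleftrightarrow> fs = [j]"
proof
  assume eq: "sep_word a b fs = replicate j a"
  obtain f fs' where fs: "fs = f # fs'" using assms(2) by (cases fs) auto
  have "fs' = []"
  proof (rule ccontr)
    assume "fs' \<noteq> []"
    then have "b \<in> set (sep_word a b fs)" using fs by (simp add: sep_word_Cons)
    then show False using eq assms(1) by simp
  qed
  then show "fs = [j]" using eq fs by simp
qed simp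

lemma sublist_replicate_iff: "sublist u (replicate e a) \<longleftrightarrow> (\<exists>j\<le>e. u = replicate j a)"
proof
  assume u: "sublist u (replicate e a)"
  then have "\<forall>x\<in>set u. x = a" using set_mono_sublist[OF u] by auto
  then have "u = replicate (length u) a" using replicate_length_same[of u a] by simp
  then show "\<exists>j\<le>e. u = replicate j a" using sublist_length_le[OF u] by auto
next
  assume "\<exists>j\<le>e. u = replicate j a"
  then show "sublist u (replicate e a)"
    by (metis le_add_diff_inverse prefix_imp_sublist prefixI replicate_add)
qed

lemma suffix_replicate_iff: "suffix u (replicate e a) \<longleftrightarrow> (\<exists>j\<le>e. u = replicate j a)"
proof
  assume "suffix u (replicate e a)"
  then show "\<exists>j\<le>e. u = replicate j a"
    by (simp add: sublist_replicate_iff[symmetric] suffix_imp_sublist)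
next
  assume "\<exists>j\<le>e. u = replicate j a"
  then show "suffix u (replicate e a)"
    by (metis le_add_diff_inverse2 replicate_add suffixI)
qed

lemma prefix_replicate_append_iff:
  assumes "a \<noteq> b" "Z = [] \<or> hd Z = b"
  shows "prefix (replicate f a) (replicate e a @ Z) \<longleftrightarrow> f \<le> e"
proof
  assume pre: "prefix (replicate f a) (replicate e a @ Z)"
  show "f \<le> e"
  proof (rule ccontr)
    assume "\<not> f \<le> e"
    then obtain k where "f = Suc (e + k)" using less_imp_Suc_add[of e f] by auto
    then have "replicate f a = replicate e a @ a # replicate k a"
      by (simp add: replicate_add replicate_app_Cons_same)
    then show False using pre assms by (auto simp: prefix_def)
  qed
next
  assume "f \<le> e"
  then have "replicate e a @ Z = replicate f a @ (replicate (e - f) a @ Z)"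
    by (simp add: replicate_add[symmetric])
  then show "prefix (replicate f a) (replicate e a @ Z)" by (rule prefixI)
qed

lemma exps_prefix_Nil2: "exps_prefix fs [] \<Longrightarrow> fs = []"
  by (cases fs; cases "tl fs") auto

lemma prefix_sep_word_iff:
  assumes "a \<noteq> b" "fs \<noteq> []" "es \<noteq> []"
  shows "prefix (sep_word a b fs) (sep_word a b es) \<longleftrightarrow> exps_prefix fs es"
  using assms(2,3)
proof (induction fs es rule: exps_prefix.induct)
  case (3 f e es)
  show ?case
  proof (cases es)
    case Nil then show ?thesis using prefix_replicate_append_iff[OF assms(1), of "[]" f e] by simp
  next
    case Cons then show ?thesis
      using prefix_replicate_append_iff[OF assms(1), of "b # sep_word a b es" f e]
      by (simp add: sep_word_Cons)
  qed
next
  case (5 f f' fs e es)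
  show ?case
  proof (cases es)
    case Nil
    have "b \<in> set (sep_word a b (f # f' # fs))" by simp
    then have "\<not> prefix (sep_word a b (f # f' # fs)) (replicate e a)"
      using assms(1) set_mono_prefix by fastforce
    then show ?thesis using Nil exps_prefix_Nil2 by auto
  next
    case (Cons e' es')
    have "prefix (sep_word a b (f # f' # fs)) (sep_word a b (e # e' # es')) \<longleftrightarrow>
        f = e \<and> prefix (sep_word a b (f' # fs)) (sep_word a b (e' # es'))"
      using replicate_Cons_eq_iff[OF assms(1)] by (auto simp: prefix_def)
    then show ?thesis using 5 Cons by simp
  qed
qed simp_all

lemma sublist_append_Cons_iff:
  "sublist u (X @ c # Y) \<longleftrightarrow>
     sublist u X \<or> sublist u Y \<or> (\<exists>x y. u = x @ c # y \<and> suffix x X \<and> prefix y Y)"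
  by (auto simp: sublist_append sublist_Cons_right prefix_Cons suffix_imp_sublist)
    (metis append_Nil Nil_suffix)

lemma sep_word_across_b_iff:
  assumes "a \<noteq> b" "es \<noteq> []"
  shows "(\<exists>x y. sep_word a b fs = x @ b # y \<and> suffix x (replicate e a) \<and> prefix y (sep_word a b es))
    \<longleftrightarrow> (\<exists>f fs'. fs = f # fs' \<and> fs' \<noteq> [] \<and> f \<le> e \<and> exps_prefix fs' es)"
proof
  assume "\<exists>x y. sep_word a b fs = x @ b # y \<and> suffix x (replicate e a) \<and>
    prefix y (sep_word a b es)"
  then obtain j y where j: "j \<le> e" "sep_word a b fs = replicate j a @ b # y"
    "prefix y (sep_word a b es)"
    by (auto simp: suffix_replicate_iff)
  then obtain fs' where "fs = j # fs'" "fs' \<noteq> []" "y = sep_word a b fs'"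
    using sep_word_eq_replicate_Cons[OF assms(1)] by blast
  then show "\<exists>f fs'. fs = f # fs' \<and> fs' \<noteq> [] \<and> f \<le> e \<and> exps_prefix fs' es"
    using j prefix_sep_word_iff[OF assms(1) _ assms(2)] by auto
next
  assume "\<exists>f fs'. fs = f # fs' \<and> fs' \<noteq> [] \<and> f \<le> e \<and> exps_prefix fs' es"
  then obtain f fs' where fs': "fs = f # fs'" "fs' \<noteq> []" "f \<le> e" "exps_prefix fs' es"
    by blast
  then have "sep_word a b fs = replicate f a @ b # sep_word a b fs'"
    "prefix (sep_word a b fs') (sep_word a b es)"
    using prefix_sep_word_iff[OF assms(1) _ assms(2)] by (auto simp: sep_word_Cons)
  moreover have "suffix (replicate f a) (replicate e a)"
    unfolding suffix_replicate_iff using fs'(3) by blast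
  ultimately show "\<exists>x y. sep_word a b fs = x @ b # y \<and> suffix x (replicate e a) \<and>
      prefix y (sep_word a b es)"
    by blast
qed

lemma sublist_sep_word_iff:
  assumes "a \<noteq> b" "fs \<noteq> []" "es \<noteq> []"
  shows "sublist (sep_word a b fs) (sep_word a b es) \<longleftrightarrow> exps_sublist fs es"
  using assms(3)
proof (induction es)
  case (Cons e es0)
  obtain f r where fr: "fs = f # r" using assms(2) by (cases fs) auto
  show ?case
  proof (cases es0)
    case Nil
    have "sublist (sep_word a b fs) (sep_word a b [e]) \<longleftrightarrow> (\<exists>j\<le>e. fs = [j])"
      by (simp add: sublist_replicate_iff sep_word_eq_replicate_iff[OF assms(1,2)])
    also have "\<dots> \<longleftrightarrow> exps_sublist fs [e]"
      unfolding fr by (cases r) (auto dest: exps_prefix_Nil2)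
    finally show ?thesis using Nil by simp
  next
    case (Cons e' es)
    have "sublist (sep_word a b fs) (sep_word a b (e # e' # es)) \<longleftrightarrow>
        (\<exists>j\<le>e. fs = [j]) \<or> exps_sublist fs (e' # es) \<or>
        (\<exists>f fs'. fs = f # fs' \<and> fs' \<noteq> [] \<and> f \<le> e \<and> exps_prefix fs' (e' # es))"
      using Cons.IH Cons sep_word_across_b_iff[OF assms(1), of "e' # es" fs e]
      by (simp add: sublist_append_Cons_iff sublist_replicate_iff
          sep_word_eq_replicate_iff[OF assms(1,2)])
    also have "\<dots> \<longleftrightarrow> exps_sublist fs (e # e' # es)"
      unfolding fr by (cases r) auto
    finally show ?thesis using Cons by simp
  qed
qed simp

lemma suffix_sep_word_iff:
  assumes "a \<noteq> b" "fs \<noteq> []" "es \<noteq> []"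
  shows "suffix (sep_word a b fs) (sep_word a b es) \<longleftrightarrow> exps_prefix (rev fs) (rev es)"
  using prefix_sep_word_iff[OF assms(1), of "rev fs" "rev es"] assms(2,3)
  by (simp add: suffix_to_prefix rev_sep_word)

lemma rich_sep_word_snocI:
  assumes "a \<noteq> b" "rich (sep_word a b es)" "es \<noteq> []" "fs \<noteq> []"
    "sep_word a b es @ [c] = sep_word a b es'" "exps_prefix fs (rev es')" "rev fs = fs"
    "sep_word a b fs \<noteq> []" "\<not> exps_sublist fs es"
  shows "rich (sep_word a b es')"
proof -
  have "es' \<noteq> []" using assms(4,6) exps_prefix_Nil2 by fastforce
  then have "suffix (sep_word a b fs) (sep_word a b es')"
    using suffix_sep_word_iff[OF assms(1,4)] assms(6,7) by simp
  then show ?thesis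
    using assms sublist_sep_word_iff[OF assms(1,4,3)] palindrome_sep_word
    by (metis rich_snocI)
qed

lemma rich_sep_word_ConsI:
  assumes "a \<noteq> b" "rich (sep_word a b es)" "es \<noteq> []" "fs \<noteq> []"
    "c # sep_word a b es = sep_word a b es'" "exps_prefix fs es'" "rev fs = fs"
    "sep_word a b fs \<noteq> []" "\<not> exps_sublist fs es"
  shows "rich (sep_word a b es')"
proof -
  have "es' \<noteq> []" using assms(4,6) exps_prefix_Nil2 by fastforce
  then have "prefix (sep_word a b fs) (sep_word a b es')"
    using prefix_sep_word_iff[OF assms(1,4)] assms(6) by simp
  then show ?thesis
    using assms sublist_sep_word_iff[OF assms(1,4,3)] palindrome_sep_word
    by (metis rich_ConsI)
qed

text \<open>Each family is grown from a shorter one by adding one letter; the list \<open>fs\<close> supplied at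
  each step is the exponent list of the palindrome that is new in the grown word.\<close>

context
  fixes a b :: 'x
  assumes ab: "a \<noteq> b"
begin

lemma rich_sep_word_r: "rich (sep_word a b [r])"
proof (induction r)
  case 0 then show ?case by (simp add: rich_Nil)
next
  case (Suc r) then show ?case
    by (rule rich_sep_word_snocI[OF ab, where fs = "[Suc r]" and c = a])
      (simp_all add: replicate_append_same)
qed

lemma rich_sep_word_rs: "rich (sep_word a b [r, s])"
proof (induction s)
  case 0 show ?case
    by (rule rich_sep_word_snocI[OF ab rich_sep_word_r[of r], where fs = "[0, 0]" and c = b])
      simp_all
next
  case (Suc s)
  show ?case
  proof (cases "Suc s \<le> r")
    case True then show ?thesis
      by (intro rich_sep_word_snocI[OF ab Suc, where fs = "[Suc s, Suc s]" and c = a])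
        (simp_all add: replicate_append_same)
  next
    case False then show ?thesis
      by (intro rich_sep_word_snocI[OF ab Suc, where fs = "[Suc s]" and c = a])
        (simp_all add: replicate_append_same)
  qed
qed

lemma rich_sep_word_0rs: "rich (sep_word a b [0, r, s])"
  by (rule rich_sep_word_ConsI[OF ab rich_sep_word_rs[of r s], where fs = "[0, r, 0]" and c = b])
    simp_all

lemma rich_sep_word_1rs: "rich (sep_word a b [1, r, s])"
proof -
  consider "1 \<le> s" | "s = 0" "r = 0" | "s = 0" "0 < r" by linarith
  then show ?thesis
  proof cases
    case 1 then show ?thesis
      by (intro rich_sep_word_ConsI[OF ab rich_sep_word_0rs[of r s], where fs = "[1, r, 1]"
            and c = a]) simp_all
  next
    case 2 then show ?thesis
      by (intro rich_sep_word_ConsI[OF ab rich_sep_word_0rs[of r s], where fs = "[1]" and c = a])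
        simp_all
  next
    case 3 then show ?thesis
      by (intro rich_sep_word_ConsI[OF ab rich_sep_word_0rs[of r s], where fs = "[1, 1]" and c = a])
        simp_all
  qed
qed

lemma rich_sep_word_01rs: "rich (sep_word a b [0, 1, r, s])"
proof (cases "r = 1")
  case True then show ?thesis
    by (intro rich_sep_word_ConsI[OF ab rich_sep_word_1rs[of r s], where fs = "[0, 1, 1, 0]"
          and c = b])
      simp_all
next
  case False then show ?thesis
    by (intro rich_sep_word_ConsI[OF ab rich_sep_word_1rs[of r s], where fs = "[0, 1, 0]"
          and c = b])
      simp_all
qed

lemma rich_sep_word_11rs: "rich (sep_word a b [1, 1, r, s])"
proof -
  consider "r = 0" | "r = 1" "s = 0" | "r = 1" "s \<ge> 1" | "r \<ge> 2" by linarith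
  then show ?thesis
  proof cases
    case 1 then show ?thesis
      by (intro rich_sep_word_ConsI[OF ab rich_sep_word_01rs[of r s], where fs = "[1, 1]"
            and c = a])
        simp_all
  next
    case 2 then show ?thesis
      by (intro rich_sep_word_ConsI[OF ab rich_sep_word_01rs[of r s], where fs = "[1, 1, 1]"
            and c = a])
        simp_all
  next
    case 3 then show ?thesis
      by (intro rich_sep_word_ConsI[OF ab rich_sep_word_01rs[of r s], where fs = "[1, 1, 1, 1]"
            and c = a])
        simp_all
  next
    case 4 then show ?thesis
      by (intro rich_sep_word_ConsI[OF ab rich_sep_word_01rs[of r s], where fs = "[1, 1, 1]"
            and c = a])
        simp_all
  qed
qed

lemma rich_sep_word_2rs: "rich (sep_word a b [2, r, s])"
proof -
  consider "s \<ge> 2" | "s \<le> 1" "r \<le> 1" | "s \<le> 1" "r \<ge> 2" by linarith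
  then show ?thesis
  proof cases
    case 1 then show ?thesis
      by (intro rich_sep_word_ConsI[OF ab rich_sep_word_1rs[of r s], where fs = "[2, r, 2]"
            and c = a])
        (simp_all add: numeral_2_eq_2)
  next
    case 2 then show ?thesis
      by (intro rich_sep_word_ConsI[OF ab rich_sep_word_1rs[of r s], where fs = "[2]" and c = a])
        (simp_all add: numeral_2_eq_2)
  next
    case 3 then show ?thesis
      by (intro rich_sep_word_ConsI[OF ab rich_sep_word_1rs[of r s], where fs = "[2, 2]" and c = a])
        (simp_all add: numeral_2_eq_2)
  qed
qed

lemma rich_sep_word_02rs: "rich (sep_word a b [0, 2, r, s])"
proof (cases "r = 2")
  case True then show ?thesis
    by (intro rich_sep_word_ConsI[OF ab rich_sep_word_2rs[of r s], where fs = "[0, 2, 2, 0]"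
          and c = b])
      (simp_all add: numeral_2_eq_2)
next
  case False then show ?thesis
    by (intro rich_sep_word_ConsI[OF ab rich_sep_word_2rs[of r s], where fs = "[0, 2, 0]"
          and c = b])
      (simp_all add: numeral_2_eq_2)
qed

lemma rich_sep_word_00rs: "rich (sep_word a b [0, 0, r, s])"
proof (cases "r = 0")
  case True then show ?thesis
    by (intro rich_sep_word_ConsI[OF ab rich_sep_word_0rs[of r s], where fs = "[0, 0, 0, 0]"
          and c = b])
      simp_all
next
  case False then show ?thesis
    by (intro rich_sep_word_ConsI[OF ab rich_sep_word_0rs[of r s], where fs = "[0, 0, 0]"
          and c = b])
      simp_all
qed

lemma rich_sep_word_10rs: "rich (sep_word a b [1, 0, r, s])"
proof -
  consider "r = 0" "s = 0" | "r = 0" "s \<ge> 1" | "r \<ge> 1" by linarith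
  then show ?thesis
  proof cases
    case 1 then show ?thesis
      by (intro rich_sep_word_ConsI[OF ab rich_sep_word_00rs[of r s], where fs = "[1]" and c = a])
        simp_all
  next
    case 2 then show ?thesis
      by (intro rich_sep_word_ConsI[OF ab rich_sep_word_00rs[of r s], where fs = "[1, 0, 0, 1]"
            and c = a])
        simp_all
  next
    case 3 then show ?thesis
      by (intro rich_sep_word_ConsI[OF ab rich_sep_word_00rs[of r s], where fs = "[1, 0, 1]"
            and c = a])
        simp_all
  qed
qed

lemma rich_sep_word_r0: "rich (sep_word a b [r, 0])"
  by (rule rich_sep_word_snocI[OF ab rich_sep_word_r[of r], where fs = "[0, 0]" and c = b]) simp_all

lemma rich_sep_word_r1: "rich (sep_word a b [r, 1])"
proof (cases "r = 0")
  case True then show ?thesis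
    by (intro rich_sep_word_snocI[OF ab rich_sep_word_r0[of r], where fs = "[1]" and c = a])
      simp_all
next
  case False then show ?thesis
    by (intro rich_sep_word_snocI[OF ab rich_sep_word_r0[of r], where fs = "[1, 1]" and c = a])
      simp_all
qed

lemma rich_sep_word_r10: "rich (sep_word a b [r, 1, 0])"
  by (rule rich_sep_word_snocI[OF ab rich_sep_word_r1[of r], where fs = "[0, 1, 0]" and c = b])
    simp_all

lemma rich_sep_word_r1s: "rich (sep_word a b [r, 1, s])"
proof (induction s)
  case 0 show ?case by (rule rich_sep_word_r10)
next
  case (Suc s)
  consider "s = 0" "r = 0" | "s = 0" "r \<ge> 1" | "s \<ge> 1" "Suc s \<le> r" | "s \<ge> 1" "\<not> Suc s \<le> r"
    by linarith
  then show ?case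
  proof cases
    case 1 then show ?thesis
      by (intro rich_sep_word_snocI[OF ab Suc, where fs = "[1, 1]" and c = a])
        (simp_all add: replicate_append_same)
  next
    case 2 then show ?thesis
      by (intro rich_sep_word_snocI[OF ab Suc, where fs = "[1, 1, 1]" and c = a])
        (simp_all add: replicate_append_same)
  next
    case 3 then show ?thesis
      by (intro rich_sep_word_snocI[OF ab Suc, where fs = "[Suc s, 1, Suc s]" and c = a])
        (simp_all add: replicate_append_same)
  next
    case 4 then show ?thesis
      by (intro rich_sep_word_snocI[OF ab Suc, where fs = "[Suc s]" and c = a])
        (simp_all add: replicate_append_same)
  qed
qed

lemma rich_sep_word_0r1s: "rich (sep_word a b [0, r, 1, s])"
proof -
  consider "r = 0" | "r = 1" | "r \<ge> 2" by linarith
  then show ?thesis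
  proof cases
    case 1 then show ?thesis
      by (intro rich_sep_word_ConsI[OF ab rich_sep_word_r1s[of r s], where fs = "[0, 0, 0]"
            and c = b])
        simp_all
  next
    case 2 then show ?thesis
      by (intro rich_sep_word_ConsI[OF ab rich_sep_word_r1s[of r s], where fs = "[0, 1, 1, 0]"
            and c = b])
        simp_all
  next
    case 3 then show ?thesis
      by (intro rich_sep_word_ConsI[OF ab rich_sep_word_r1s[of r s], where fs = "[0, r, 0]"
            and c = b])
        simp_all
  qed
qed

lemma rich_sep_word_1r1s: "rich (sep_word a b [1, r, 1, s])"
proof -
  consider "r = 0" | "r = 1" "s = 0" | "r = 1" "s \<ge> 1" | "r \<ge> 2" by linarith
  then show ?thesis
  proof cases
    case 1 then show ?thesis
      by (intro rich_sep_word_ConsI[OF ab rich_sep_word_0r1s[of r s], where fs = "[1, 0, 1]"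
            and c = a])
        simp_all
  next
    case 2 then show ?thesis
      by (intro rich_sep_word_ConsI[OF ab rich_sep_word_0r1s[of r s], where fs = "[1, 1, 1]"
            and c = a])
        simp_all
  next
    case 3 then show ?thesis
      by (intro rich_sep_word_ConsI[OF ab rich_sep_word_0r1s[of r s], where fs = "[1, 1, 1, 1]"
            and c = a])
        simp_all
  next
    case 4 then show ?thesis
      by (intro rich_sep_word_ConsI[OF ab rich_sep_word_0r1s[of r s], where fs = "[1, r, 1]"
            and c = a])
        simp_all
  qed
qed

lemma rich_sep_word_r110: "rich (sep_word a b [r, 1, 1, 0])"
  by (rule rich_sep_word_snocI[OF ab rich_sep_word_r1s[of r 1], where fs = "[0, 1, 1, 0]"
        and c = b])
    simp_all

lemma rich_sep_word_r11s: "rich (sep_word a b [r, 1, 1, s])"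
proof (induction s)
  case 0 show ?case by (rule rich_sep_word_r110)
next
  case (Suc s)
  consider "s = 0" "r = 0" | "s = 0" "r \<ge> 1" | "s \<ge> 1" "Suc s \<le> r" | "s \<ge> 1" "\<not> Suc s \<le> r"
    by linarith
  then show ?case
  proof cases
    case 1 then show ?thesis
      by (intro rich_sep_word_snocI[OF ab Suc, where fs = "[1, 1, 1]" and c = a])
        (simp_all add: replicate_append_same)
  next
    case 2 then show ?thesis
      by (intro rich_sep_word_snocI[OF ab Suc, where fs = "[1, 1, 1, 1]" and c = a])
        (simp_all add: replicate_append_same)
  next
    case 3 then show ?thesis
      by (intro rich_sep_word_snocI[OF ab Suc, where fs = "[Suc s, 1, 1, Suc s]" and c = a])
        (simp_all add: replicate_append_same)
  next
    case 4 then show ?thesis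
      by (intro rich_sep_word_snocI[OF ab Suc, where fs = "[Suc s]" and c = a])
        (simp_all add: replicate_append_same)
  qed
qed

end

text \<open>The blocks lying inside \<open>a\<^sup>n\<close> consist of \<open>a\<close>'s only, so they still form a power of \<open>a\<close>
  after the reversal.\<close>

lemma block_reversal_replicate_append:
  assumes "Bs \<noteq> []" "\<forall>B\<in>set Bs. B \<noteq> []" "concat Bs = replicate n a @ z" "z \<noteq> []"
  shows "\<exists>r x z' y. r \<le> n \<and> z = x @ z' \<and> x \<noteq> [] \<and> ((z' = [] \<and> y = []) \<or> (z' \<noteq> [] \<and> y \<in> BR z')) \<and>
           concat (rev Bs) = y @ replicate r a @ x @ replicate (n - r) a"
  using assms
proof (induction Bs arbitrary: n)
  case Nil then show ?case by simp
next
  case (Cons B R)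
  have eq: "B @ concat R = replicate n a @ z" using Cons.prems by simp
  show ?case
  proof (cases "length B \<le> n")
    case True
    have "B = take (length B) (replicate n a @ z)" using eq by (metis append_eq_conv_conj)
    then have B: "B = replicate (length B) a" using True by simp
    have R: "concat R = replicate (n - length B) a @ z"
      using eq True by (simp add: append_eq_append_conv_if drop_replicate)
    have "R \<noteq> []" using R Cons.prems(4) by auto
    then obtain r x z' y where IH: "r \<le> n - length B" "z = x @ z'" "x \<noteq> []"
      "(z' = [] \<and> y = []) \<or> (z' \<noteq> [] \<and> y \<in> BR z')"
      "concat (rev R) = y @ replicate r a @ x @ replicate (n - length B - r) a"
      using Cons.IH[of "n - length B"] Cons.prems R by auto
    have "concat (rev (B # R)) = y @ replicate r a @ x @ replicate (n - length B - r) a @ B"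
      using IH(5) by simp
    also have "replicate (n - length B - r) a @ B = replicate (n - length B - r + length B) a"
      using B by (metis replicate_add)
    also have "n - length B - r + length B = n - r" using IH(1) True by arith
    finally show ?thesis
      using IH(1-4) by (intro exI[of _ r] exI[of _ x] exI[of _ z'] exI[of _ y]) auto
  next
    case False
    define x where "x = drop n B"
    have tB: "take n B = replicate n a" and z: "z = x @ concat R"
      using eq False unfolding x_def by (auto simp: append_eq_append_conv_if take_replicate)
    have B: "B = replicate n a @ x" unfolding x_def tB[symmetric] by simp
    have xne: "x \<noteq> []" using False unfolding x_def by simp
    show ?thesis
    proof (cases "R = []")
      case True
      then show ?thesis using B z xne
        by (intro exI[of _ n] exI[of _ x] exI[of _ "[]"] exI[of _ "[]"]) auto
    next
      case RNE: False
      have "concat (rev R) \<in> BR (concat R)" using RNE Cons.prems(2) unfolding BR_def by auto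
      moreover have "concat R \<noteq> []" using RNE Cons.prems(2) by (cases R) auto
      ultimately show ?thesis using B z xne
        by (intro exI[of _ n] exI[of _ x] exI[of _ "concat R"] exI[of _ "concat (rev R)"]) auto
    qed
  qed
qed

lemma rich_tl: "rich w \<Longrightarrow> rich (tl w)"
  by (rule rich_suffix[OF suffix_tl])

text \<open>Every block reversal of \<open>a\<^sup>n b a b a b\<close> is a suffix of one of the rich words treated
  above.\<close>

lemma all_rich_BR_replicate_babab:
  assumes "a \<noteq> b"
  shows "\<forall>v\<in>BR (replicate n a @ [b, a, b, a, b]). rich v"
proof
  fix v assume "v \<in> BR (replicate n a @ [b, a, b, a, b])"
  then obtain Bs where Bs: "v = concat (rev Bs)" "Bs \<noteq> []" "\<forall>B\<in>set Bs. B \<noteq> []"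
    "concat Bs = replicate n a @ [b, a, b, a, b]" unfolding BR_def by blast
  obtain r x z' y where S: "r \<le> n" "[b, a, b, a, b] = x @ z'" "x \<noteq> []"
      "(z' = [] \<and> y = []) \<or> (z' \<noteq> [] \<and> y \<in> BR z')"
      "v = y @ replicate r a @ x @ replicate (n - r) a"
    using block_reversal_replicate_append[OF Bs(2,3,4)] Bs(1) by blast
  define s where "s = n - r"
  note fams = rich_sep_word_11rs[OF assms, of r s] rich_sep_word_10rs[OF assms, of "Suc r" s]
    rich_sep_word_02rs[OF assms, of r s] rich_sep_word_10rs[OF assms, of r "Suc s"]
    rich_sep_word_1r1s[OF assms, of r s] rich_sep_word_r11s[OF assms, of r s]
    rich_tl[OF rich_sep_word_11rs[OF assms, of "Suc r" s]]
    rich_tl[OF rich_sep_word_10rs[OF assms, of "Suc (Suc r)" s]]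
    rich_tl[OF rich_sep_word_11rs[OF assms, of r "Suc s"]]
    rich_tl[OF rich_sep_word_10rs[OF assms, of "Suc r" "Suc s"]]
    rich_tl[OF rich_sep_word_1r1s[OF assms, of "Suc r" s]]
    rich_tl[OF rich_sep_word_1r1s[OF assms, of r "Suc s"]]
  show "rich v"
    using S(2-5) fams unfolding s_def[symmetric]
    by (auto simp: Cons_eq_append_conv BR_eq_block_partitions numeral_2_eq_2)
qed

section \<open>Run-length encodings\<close>

lemma rle_Nil: "rle w [] \<longleftrightarrow> w = []"
  by (auto simp: rle_def)

lemma rle_Cons: "rle w ((c, n) # r) \<longleftrightarrow>
    (\<exists>w1. w = replicate n c @ w1 \<and> n \<ge> 1 \<and> rle w1 r \<and> (r = [] \<or> fst (hd r) \<noteq> c))"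
proof
  assume A: "rle w ((c, n) # r)"
  have 1: "w = replicate n c @ concat (map (\<lambda>(c, n). replicate n c) r)"
    using A by (simp add: rle_def)
  have 2: "n \<ge> 1" "\<forall>p\<in>set r. snd p \<ge> 1" using A by (auto simp: rle_def)
  have 3: "\<forall>i. Suc i < length r \<longrightarrow> fst (r ! i) \<noteq> fst (r ! Suc i)"
  proof (intro allI impI)
    fix i assume "Suc i < length r"
    then have "Suc (Suc i) < length ((c, n) # r)" by simp
    then show "fst (r ! i) \<noteq> fst (r ! Suc i)" using A unfolding rle_def
      by (metis nth_Cons_Suc)
  qed
  have 4: "r = [] \<or> fst (hd r) \<noteq> c"
  proof (cases r)
    case (Cons x r')
    have "Suc 0 < length ((c, n) # r)" using Cons by simp
    then have "fst (((c, n) # r) ! 0) \<noteq> fst (((c, n) # r) ! Suc 0)"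
      using A unfolding rle_def by blast
    then show ?thesis using Cons by simp
  qed simp
  show "\<exists>w1. w = replicate n c @ w1 \<and> n \<ge> 1 \<and> rle w1 r \<and> (r = [] \<or> fst (hd r) \<noteq> c)"
    using 1 2 3 4 unfolding rle_def by blast
next
  assume "\<exists>w1. w = replicate n c @ w1 \<and> n \<ge> 1 \<and> rle w1 r \<and> (r = [] \<or> fst (hd r) \<noteq> c)"
  then obtain w1 where B: "w = replicate n c @ w1" "n \<ge> 1" "rle w1 r" "r = [] \<or> fst (hd r) \<noteq> c"
    by blast
  have "\<forall>i. Suc i < length ((c, n) # r) \<longrightarrow> fst (((c, n) # r) ! i) \<noteq> fst (((c, n) # r) ! Suc i)"
  proof (intro allI impI)
    fix i assume i: "Suc i < length ((c, n) # r)"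
    show "fst (((c, n) # r) ! i) \<noteq> fst (((c, n) # r) ! Suc i)"
    proof (cases i)
      case 0 then show ?thesis using B(4) i by (cases r) auto
    next
      case (Suc j) then show ?thesis using B(3) i unfolding rle_def by simp
    qed
  qed
  then show "rle w ((c, n) # r)" using B unfolding rle_def by auto
qed

lemma rle_Cons_determined:
  assumes "rle w ((c, n) # r)"
  shows "w \<noteq> []" "c = hd w" "n = length (takeWhile (\<lambda>x. x = c) w)"
    "rle (dropWhile (\<lambda>x. x = c) w) r"
proof -
  obtain w1 where w: "w = replicate n c @ w1" "n \<ge> 1" "rle w1 r" "r = [] \<or> fst (hd r) \<noteq> c"
    using assms by (auto simp: rle_Cons)
  have "w1 = [] \<or> hd w1 \<noteq> c"
  proof (cases r)
    case (Cons p r') then show ?thesis using w(3,4) by (cases p) (auto simp: rle_Cons)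
  qed (use w(3) in \<open>simp add: rle_Nil\<close>)
  then have "takeWhile (\<lambda>x. x = c) w1 = []" "dropWhile (\<lambda>x. x = c) w1 = w1"
    by (cases w1; auto)+
  then have "takeWhile (\<lambda>x. x = c) w = replicate n c" "dropWhile (\<lambda>x. x = c) w = w1"
    unfolding w(1) by (induction n) simp_all
  then show "w \<noteq> []" "c = hd w" "n = length (takeWhile (\<lambda>x. x = c) w)"
    "rle (dropWhile (\<lambda>x. x = c) w) r"
    using w by (auto simp: hd_append)
qed

lemma rle_unique: "rle w cs \<Longrightarrow> rle w cs' \<Longrightarrow> cs = cs'"
proof (induction cs arbitrary: w cs')
  case Nil
  then have "w = []" by (simp add: rle_Nil)
  show ?case
  proof (rule ccontr)
    assume "[] \<noteq> cs'"
    then obtain c n r' where "cs' = (c, n) # r'" by (metis neq_Nil_conv surj_pair)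
    then show False using rle_Cons_determined(1)[of w c n r'] Nil.prems(2) \<open>w = []\<close> by simp
  qed
next
  case (Cons p r)
  obtain c n where p: "p = (c, n)" by fastforce
  note det = rle_Cons_determined[OF Cons.prems(1)[unfolded p]]
  then have "cs' \<noteq> []" using Cons.prems(2) by (auto simp: rle_Nil)
  then obtain c' n' r' where cs': "cs' = (c', n') # r'" by (metis neq_Nil_conv surj_pair)
  note det' = rle_Cons_determined[OF Cons.prems(2)[unfolded cs']]
  have "c' = c" "n' = n" using det det' by simp_all
  moreover have "r = r'" using Cons.IH[OF det(4)] det'(4) \<open>c' = c\<close> by simp
  ultimately show ?case using p cs' by simp
qed

lemma runs_eq: "rle w cs \<Longrightarrow> runs w = length cs"
  unfolding runs_def using rle_unique by (metis theI)

fun alt_word :: "'a \<Rightarrow> 'a \<Rightarrow> nat list \<Rightarrow> 'a list" where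
  "alt_word a b [] = []"
| "alt_word a b (n # ns) = replicate n a @ alt_word b a ns"

fun alt_runs :: "'a \<Rightarrow> 'a \<Rightarrow> nat list \<Rightarrow> ('a \<times> nat) list" where
  "alt_runs a b [] = []"
| "alt_runs a b (n # ns) = (a, n) # alt_runs b a ns"

lemma length_alt_word: "length (alt_word a b ns) = sum_list ns"
  by (induction ns arbitrary: a b) auto

lemma map_alt_word: "map f (alt_word a b ns) = alt_word (f a) (f b) ns"
  by (induction ns arbitrary: a b) auto

lemma compl_alt_word:
  assumes "a \<noteq> b"
  shows "compl a b (alt_word a b ns) = alt_word b a ns"
    and "compl a b (alt_word b a ns) = alt_word a b ns"
  using assms unfolding compl_def map_alt_word by (simp_all add: swap_ab_def)

lemma alt_word_append:
  "even (length ms) \<Longrightarrow> alt_word a b (ms @ ns) = alt_word a b ms @ alt_word a b ns"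
  by (induction ms arbitrary: a b rule: induct_list012) auto

lemma rev_alt_word: "even (length ns) \<Longrightarrow> rev (alt_word a b ns) = alt_word b a (rev ns)"
  by (induction ns arbitrary: a b rule: induct_list012) (auto simp: alt_word_append)

lemma rle_alt_word:
  assumes "a \<noteq> b" "\<forall>n\<in>set ns. 0 < n"
  shows "rle (alt_word a b ns) (alt_runs a b ns)"
  using assms
proof (induction ns arbitrary: a b)
  case Nil then show ?case by (simp add: rle_Nil)
next
  case (Cons n ns) then show ?case by (cases ns) (auto simp: rle_Cons rle_Nil)
qed

lemma runs_alt_word: "a \<noteq> b \<Longrightarrow> \<forall>n\<in>set ns. 0 < n \<Longrightarrow> runs (alt_word a b ns) = length ns"
proof -
  have "length (alt_runs a b ns) = length ns" for a b :: 'a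
    by (induction ns arbitrary: a b) auto
  then show "a \<noteq> b \<Longrightarrow> \<forall>n\<in>set ns. 0 < n \<Longrightarrow> runs (alt_word a b ns) = length ns"
    using runs_eq rle_alt_word by metis
qed

lemma alt_word_inj:
  assumes "a \<noteq> b" "\<forall>n\<in>set ns. 0 < n" "\<forall>n\<in>set ms. 0 < n" "alt_word a b ns = alt_word a b ms"
  shows "ns = ms"
proof -
  have snd: "map snd (alt_runs a b ns) = ns" for a b :: 'a and ns
    by (induction ns arbitrary: a b) auto
  show ?thesis using rle_unique rle_alt_word[OF assms(1,2)] rle_alt_word[OF assms(1,3)] assms(4) snd
    by metis
qed

lemma hd_alt_word: "ns \<noteq> [] \<Longrightarrow> hd ns > 0 \<Longrightarrow> hd (alt_word a b ns) = a"
  by (cases ns) auto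

lemma alt_word_exists:
  assumes "a \<noteq> b" "set w \<subseteq> {a, b}"
  shows "\<exists>ns. (\<forall>n\<in>set ns. 0 < n) \<and> (w = alt_word a b ns \<or> w = alt_word b a ns)"
  using assms(2)
proof (induction w)
  case Nil then show ?case by (intro exI[of _ "[]"]) simp
next
  case (Cons x w)
  define y where "y = (if x = a then b else a)"
  have xy: "{x, y} = {a, b}" using Cons.prems assms(1) by (auto simp: y_def)
  obtain ns where pos: "\<forall>n\<in>set ns. 0 < n" and w: "w = alt_word x y ns \<or> w = alt_word y x ns"
    using Cons xy by (auto simp: doubleton_eq_iff)
  have "\<exists>ms. (\<forall>n\<in>set ms. 0 < n) \<and> x # w = alt_word x y ms"
  proof (cases "ns \<noteq> [] \<and> w = alt_word x y ns")
    case True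
    then obtain n ms where "ns = n # ms" "w = alt_word x y ns" by (cases ns) auto
    then show ?thesis using pos by (intro exI[of _ "Suc n # ms"]) auto
  next
    case False
    then have "w = alt_word y x ns" using w by auto
    then show ?thesis using pos by (intro exI[of _ "1 # ns"]) auto
  qed
  then show ?case using xy by (auto simp: doubleton_eq_iff)
qed

section \<open>Words with six runs\<close>

definition T_set_exponents :: "nat list set" where
  "T_set_exponents =
     {[1, 2, 1, 1, 2, 1], [1, 1, 1, 2, 2, 1], [1, 1, 1, 1, 2, 2], [2, 1, 1, 2, 1, 1],
      [2, 1, 1, 1, 1, 2], [1, 1, 2, 2, 1, 1]} \<union> {[n, 1, 1, 1, 1, 1] | n. 3 \<le> n}"

definition T_closure_exponents :: "nat list set" where
  "T_closure_exponents =
     {[1, 2, 1, 1, 2, 1], [1, 1, 1, 2, 2, 1], [1, 2, 2, 1, 1, 1], [1, 1, 1, 1, 2, 2],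
      [2, 2, 1, 1, 1, 1], [2, 1, 1, 2, 1, 1], [1, 1, 2, 1, 1, 2], [2, 1, 1, 1, 1, 2],
      [1, 1, 2, 2, 1, 1]}
   \<union> {[n, 1, 1, 1, 1, 1] | n. 3 \<le> n} \<union> {[1, 1, 1, 1, 1, n] | n. 3 \<le> n}"

lemma T_closure_exponents_eq: "T_closure_exponents = T_set_exponents \<union> rev ` T_set_exponents"
  unfolding T_closure_exponents_def T_set_exponents_def setcompr_eq_image
  by (simp add: image_Un image_image insert_commute)

lemma T_set_eq: "T_set a b = alt_word a b ` T_set_exponents"
  unfolding T_set_def T_set_exponents_def setcompr_eq_image
  by (simp add: image_Un image_image numeral_eq_Suc)

lemma T_closure_eq:
  assumes "a \<noteq> b"
  shows "T_closure a b = alt_word a b ` T_closure_exponents"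
proof -
  have "rev (compl a b (alt_word a b ns)) = alt_word a b (rev ns)" if "ns \<in> T_set_exponents" for ns
    using that assms by (auto simp: T_set_exponents_def compl_alt_word rev_alt_word)
  then have "T_closure a b = alt_word a b ` T_set_exponents \<union> alt_word a b ` rev ` T_set_exponents"
    unfolding T_closure_def T_set_eq image_image by (simp cong: image_cong)
  then show ?thesis unfolding T_closure_exponents_eq image_Un .
qed

definition bad_exponents :: "nat \<Rightarrow> nat \<Rightarrow> nat \<Rightarrow> nat \<Rightarrow> nat \<Rightarrow> nat \<Rightarrow> bool" where
  "bad_exponents n1 n2 n3 n4 n5 n6 \<longleftrightarrow>
     n2 = 1 \<and> n3 = 1 \<and> 2 \<le> n4 \<and> 2 \<le> n6 \<or>
     n2 = 1 \<and> n3 = 1 \<and> 3 \<le> n4 \<or>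
     n3 = 2 \<and> n4 = 1 \<and> n5 = 1 \<and> 3 \<le> n6 \<or>
     3 \<le> n2 \<and> n3 = 2 \<or>
     n2 = 1 \<and> n3 = 2 \<and> 2 \<le> n4 \<and> 2 \<le> n6 \<or>
     n3 = 1 \<and> n4 = 1 \<and> n5 = 2 \<and> 3 \<le> n6 \<or>
     2 \<le> n2 \<and> n4 = 1 \<and> 2 \<le> n6 \<or>
     n2 = 1 \<and> 2 \<le> n3 \<and> 2 \<le> n5 \<or>
     n2 = 1 \<and> 3 \<le> n3 \<and> 2 \<le> n4 \<or>
     n3 = 1 \<and> n4 = 1 \<and> 3 \<le> n5 \<or>
     n2 = 2 \<and> 2 \<le> n3 \<and> 2 \<le> n5 \<or>
     3 \<le> n3 \<and> 2 \<le> n5 \<or>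
     2 \<le> n1 \<and> n2 = 1 \<and> n3 = 1 \<and> 3 \<le> n6"

text \<open>In each case below the word is cut as \<open>X @ C @ G @ M @ G' @ A @ Y\<close> in the sense of
  \<open>BR_witness\<close>, so that \<open>A @ M @ C\<close> is the exposed non-rich word.\<close>

lemma not_all_rich_BR_exposing_bbaababb:
  assumes "a \<noteq> b" and pos: "0 < n1" "0 < n2" "0 < n3" "0 < n4" "0 < n5" "0 < n6"
    and "n2 = 1 \<and> n3 = 1 \<and> 2 \<le> n4 \<and> 2 \<le> n6 \<or>
      n2 = 1 \<and> n3 = 1 \<and> 3 \<le> n4 \<or>
      n3 = 2 \<and> n4 = 1 \<and> n5 = 1 \<and> 3 \<le> n6 \<or>
      3 \<le> n2 \<and> n3 = 2"
  shows "\<exists>v\<in>BR (alt_word a b [n1, n2, n3, n4, n5, n6]). \<not> rich v"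
  using assms(8)
proof (elim disjE conjE)
  assume "n2 = 1" "n3 = 1" "2 \<le> n4" "2 \<le> n6"
  moreover obtain k1 k4 k5 k6 where "n1 = 1 + k1" "n4 = 2 + k4" "n5 = 1 + k5" "n6 = 2 + k6"
    using pos calculation by (metis le_Suc_ex Suc_leI One_nat_def)
  ultimately have "alt_word a b [n1, n2, n3, n4, n5, n6] =
      replicate k1 a @ [a, b, a, b, b] @ (replicate k4 b @ replicate k5 a) @
      [a] @ replicate k6 b @ [b, b] @ []"
    by (simp add: replicate_add numeral_eq_Suc replicate_app_Cons_same replicate_append_same)
  then show ?thesis
    by (rule BR_witness) (simp_all add: not_rich_small_words(4)[OF assms(1)])
next
  assume "n2 = 1" "n3 = 1" "3 \<le> n4"
  moreover obtain k1 k4 k5 k6 where "n1 = 1 + k1" "n4 = 3 + k4" "n5 = 1 + k5" "n6 = 1 + k6"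
    using pos calculation by (metis le_Suc_ex Suc_leI One_nat_def)
  ultimately have "alt_word a b [n1, n2, n3, n4, n5, n6] =
      replicate k1 a @ [a, b, a, b, b] @ replicate k4 b @
      [b, a] @ (replicate k5 a @ replicate k6 b) @ [b] @ []"
    by (simp add: replicate_add numeral_eq_Suc replicate_app_Cons_same replicate_append_same)
  then show ?thesis
    by (rule BR_witness) (simp_all add: not_rich_small_words(4)[OF assms(1)])
next
  assume "n3 = 2" "n4 = 1" "n5 = 1" "3 \<le> n6"
  moreover obtain k1 k2 k6 where "n1 = 1 + k1" "n2 = 1 + k2" "n6 = 3 + k6"
    using pos calculation by (metis le_Suc_ex Suc_leI One_nat_def)
  ultimately have "alt_word a b [n1, n2, n3, n4, n5, n6] =
      ([a] @ replicate k1 a @ replicate k2 b) @ [b, a, a, b, a, b, b] @ replicate k6 b @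
      [] @ [] @ [b] @ []"
    by (simp add: replicate_add numeral_eq_Suc replicate_app_Cons_same replicate_append_same)
  then show ?thesis
    by (rule BR_witness) (simp_all add: not_rich_small_words(4)[OF assms(1)])
next
  assume "3 \<le> n2" "n3 = 2"
  moreover obtain k1 k2 k4 k5 k6
    where "n1 = 1 + k1" "n2 = 3 + k2" "n4 = 1 + k4" "n5 = 1 + k5" "n6 = 1 + k6"
    using pos calculation by (metis le_Suc_ex Suc_leI One_nat_def)
  ultimately have "alt_word a b [n1, n2, n3, n4, n5, n6] =
      replicate k1 a @ [a, b, b] @ replicate k2 b @
      [b, a, a, b] @ (replicate k4 b @ [a] @ replicate k5 a @ replicate k6 b) @ [b] @ []"
    by (simp add: replicate_add numeral_eq_Suc replicate_app_Cons_same replicate_append_same)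
  then show ?thesis
    by (rule BR_witness) (simp_all add: not_rich_small_words(4)[OF assms(1)])
qed

lemma not_all_rich_BR_exposing_bbabaabb:
  assumes "a \<noteq> b" and pos: "0 < n1" "0 < n2" "0 < n3" "0 < n4" "0 < n5" "0 < n6"
    and "n2 = 1 \<and> n3 = 2 \<and> 2 \<le> n4 \<and> 2 \<le> n6 \<or>
      n3 = 1 \<and> n4 = 1 \<and> n5 = 2 \<and> 3 \<le> n6 \<or>
      2 \<le> n2 \<and> n4 = 1 \<and> 2 \<le> n6"
  shows "\<exists>v\<in>BR (alt_word a b [n1, n2, n3, n4, n5, n6]). \<not> rich v"
  using assms(8)
proof (elim disjE conjE)
  assume "n2 = 1" "n3 = 2" "2 \<le> n4" "2 \<le> n6"
  moreover obtain k1 k4 k5 k6 where "n1 = 1 + k1" "n4 = 2 + k4" "n5 = 1 + k5" "n6 = 2 + k6"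
    using pos calculation by (metis le_Suc_ex Suc_leI One_nat_def)
  ultimately have "alt_word a b [n1, n2, n3, n4, n5, n6] =
      replicate k1 a @ [a, b, a, a, b, b] @
      (replicate k4 b @ [a] @ replicate k5 a @ replicate k6 b) @ [b] @ [] @ [b] @ []"
    by (simp add: replicate_add numeral_eq_Suc replicate_app_Cons_same replicate_append_same)
  then show ?thesis
    by (rule BR_witness) (simp_all add: not_rich_small_words(5)[OF assms(1)])
next
  assume "n3 = 1" "n4 = 1" "n5 = 2" "3 \<le> n6"
  moreover obtain k1 k2 k6 where "n1 = 1 + k1" "n2 = 1 + k2" "n6 = 3 + k6"
    using pos calculation by (metis le_Suc_ex Suc_leI One_nat_def)
  ultimately have "alt_word a b [n1, n2, n3, n4, n5, n6] =
      ([a] @ replicate k1 a @ replicate k2 b) @ [b, a, b, a, a, b, b] @ replicate k6 b @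
      [] @ [] @ [b] @ []"
    by (simp add: replicate_add numeral_eq_Suc replicate_app_Cons_same replicate_append_same)
  then show ?thesis
    by (rule BR_witness) (simp_all add: not_rich_small_words(5)[OF assms(1)])
next
  assume "2 \<le> n2" "n4 = 1" "2 \<le> n6"
  moreover obtain k1 k2 k3 k5 k6
    where "n1 = 1 + k1" "n2 = 2 + k2" "n3 = 1 + k3" "n5 = 1 + k5" "n6 = 2 + k6"
    using pos calculation by (metis le_Suc_ex Suc_leI One_nat_def)
  ultimately have "alt_word a b [n1, n2, n3, n4, n5, n6] =
      replicate k1 a @ [a, b, b] @ (replicate k2 b @ replicate k3 a) @
      [a, b, a] @ (replicate k5 a @ replicate k6 b) @ [b, b] @ []"
    by (simp add: replicate_add numeral_eq_Suc replicate_app_Cons_same replicate_append_same)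
  then show ?thesis
    by (rule BR_witness) (simp_all add: not_rich_small_words(5)[OF assms(1)])
qed

lemma not_all_rich_BR_exposing_aabbabaa:
  assumes "a \<noteq> b" and pos: "0 < n1" "0 < n2" "0 < n3" "0 < n4" "0 < n5" "0 < n6"
    and "n2 = 1 \<and> 2 \<le> n3 \<and> 2 \<le> n5 \<or>
      n2 = 1 \<and> 3 \<le> n3 \<and> 2 \<le> n4 \<or>
      n3 = 1 \<and> n4 = 1 \<and> 3 \<le> n5"
  shows "\<exists>v\<in>BR (alt_word a b [n1, n2, n3, n4, n5, n6]). \<not> rich v"
  using assms(8)
proof (elim disjE conjE)
  assume "n2 = 1" "2 \<le> n3" "2 \<le> n5"
  moreover obtain k1 k3 k4 k5 k6
    where "n1 = 1 + k1" "n3 = 2 + k3" "n4 = 1 + k4" "n5 = 2 + k5" "n6 = 1 + k6"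
    using pos calculation by (metis le_Suc_ex Suc_leI One_nat_def)
  ultimately have "alt_word a b [n1, n2, n3, n4, n5, n6] =
      replicate k1 a @ [a, b, a, a] @ (replicate k3 a @ replicate k4 b) @
      [b] @ replicate k5 a @ [a, a, b] @ replicate k6 b"
    by (simp add: replicate_add numeral_eq_Suc replicate_app_Cons_same replicate_append_same)
  then show ?thesis
    by (rule BR_witness) (simp_all add: not_rich_small_words(2)[OF assms(1)])
next
  assume "n2 = 1" "3 \<le> n3" "2 \<le> n4"
  moreover obtain k1 k3 k4 k5 k6
    where "n1 = 1 + k1" "n3 = 3 + k3" "n4 = 2 + k4" "n5 = 1 + k5" "n6 = 1 + k6"
    using pos calculation by (metis le_Suc_ex Suc_leI One_nat_def)
  ultimately have "alt_word a b [n1, n2, n3, n4, n5, n6] =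
      replicate k1 a @ [a, b, a, a] @ replicate k3 a @
      [a, b, b] @ (replicate k4 b @ replicate k5 a) @ [a] @ ([b] @ replicate k6 b)"
    by (simp add: replicate_add numeral_eq_Suc replicate_app_Cons_same replicate_append_same)
  then show ?thesis
    by (rule BR_witness) (simp_all add: not_rich_small_words(2)[OF assms(1)])
next
  assume "n3 = 1" "n4 = 1" "3 \<le> n5"
  moreover obtain k1 k2 k5 k6 where "n1 = 1 + k1" "n2 = 1 + k2" "n5 = 3 + k5" "n6 = 1 + k6"
    using pos calculation by (metis le_Suc_ex Suc_leI One_nat_def)
  ultimately have "alt_word a b [n1, n2, n3, n4, n5, n6] =
      replicate k1 a @ [a] @ replicate k2 b @
      [b, a, b, a] @ replicate k5 a @ [a, a, b] @ replicate k6 b"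
    by (simp add: replicate_add numeral_eq_Suc replicate_app_Cons_same replicate_append_same)
  then show ?thesis
    by (rule BR_witness) (simp_all add: not_rich_small_words(2)[OF assms(1)])
qed

lemma not_all_rich_BR_exposing_aababbaa:
  assumes "a \<noteq> b" and pos: "0 < n1" "0 < n2" "0 < n3" "0 < n4" "0 < n5" "0 < n6"
    and "n2 = 2 \<and> 2 \<le> n3 \<and> 2 \<le> n5 \<or>
      3 \<le> n3 \<and> 2 \<le> n5"
  shows "\<exists>v\<in>BR (alt_word a b [n1, n2, n3, n4, n5, n6]). \<not> rich v"
  using assms(8)
proof (elim disjE conjE)
  assume "n2 = 2" "2 \<le> n3" "2 \<le> n5"
  moreover obtain k1 k3 k4 k5 k6
    where "n1 = 1 + k1" "n3 = 2 + k3" "n4 = 1 + k4" "n5 = 2 + k5" "n6 = 1 + k6"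
    using pos calculation by (metis le_Suc_ex Suc_leI One_nat_def)
  ultimately have "alt_word a b [n1, n2, n3, n4, n5, n6] =
      replicate k1 a @ [a, b, b, a, a] @ (replicate k3 a @ replicate k4 b) @
      [b] @ replicate k5 a @ [a, a] @ ([b] @ replicate k6 b)"
    by (simp add: replicate_add numeral_eq_Suc replicate_app_Cons_same replicate_append_same)
  then show ?thesis
    by (rule BR_witness) (simp_all add: not_rich_small_words(1)[OF assms(1)])
next
  assume "3 \<le> n3" "2 \<le> n5"
  moreover obtain k1 k2 k3 k4 k5 k6
    where "n1 = 1 + k1" "n2 = 1 + k2" "n3 = 3 + k3" "n4 = 1 + k4" "n5 = 2 + k5" "n6 = 1 + k6"
    using pos calculation by (metis le_Suc_ex Suc_leI One_nat_def)
  ultimately have "alt_word a b [n1, n2, n3, n4, n5, n6] =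
      ([a] @ replicate k1 a @ replicate k2 b) @ [b, a, a] @ replicate k3 a @
      [a, b] @ (replicate k4 b @ replicate k5 a) @ [a, a, b] @ replicate k6 b"
    by (simp add: replicate_add numeral_eq_Suc replicate_app_Cons_same replicate_append_same)
  then show ?thesis
    by (rule BR_witness) (simp_all add: not_rich_small_words(1)[OF assms(1)])
qed

lemma not_all_rich_BR_exposing_babbaabab:
  assumes "a \<noteq> b" and pos: "0 < n1" "0 < n2" "0 < n3" "0 < n4" "0 < n5" "0 < n6"
    and "2 \<le> n1 \<and> n2 = 1 \<and> n3 = 1 \<and> 3 \<le> n6"
  shows "\<exists>v\<in>BR (alt_word a b [n1, n2, n3, n4, n5, n6]). \<not> rich v"
  using assms(8)
proof (elim disjE conjE)
  assume "2 \<le> n1" "n2 = 1" "n3 = 1" "3 \<le> n6"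
  moreover obtain k1 k4 k5 k6 where "n1 = 2 + k1" "n4 = 1 + k4" "n5 = 1 + k5" "n6 = 3 + k6"
    using pos calculation by (metis le_Suc_ex Suc_leI One_nat_def)
  ultimately have "alt_word a b [n1, n2, n3, n4, n5, n6] =
      replicate k1 a @ [a, a, b, a, b] @ (replicate k4 b @ replicate k5 a) @
      [a, b, b] @ replicate k6 b @ [b] @ []"
    by (simp add: replicate_add numeral_eq_Suc replicate_app_Cons_same replicate_append_same)
  then show ?thesis
    by (rule BR_witness) (simp_all add: not_rich_small_words(3)[OF assms(1)])
qed

lemma not_all_rich_BR_if_bad_exponents:
  assumes "a \<noteq> b" "0 < n1" "0 < n2" "0 < n3" "0 < n4" "0 < n5" "0 < n6"
    and "bad_exponents n1 n2 n3 n4 n5 n6"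
  shows "\<exists>v\<in>BR (alt_word a b [n1, n2, n3, n4, n5, n6]). \<not> rich v"
  using assms(8) unfolding bad_exponents_def
  by (elim disjE conjE)
    (rule not_all_rich_BR_exposing_bbaababb[OF assms(1-7)]
      not_all_rich_BR_exposing_bbabaabb[OF assms(1-7)]
      not_all_rich_BR_exposing_aabbabaa[OF assms(1-7)]
      not_all_rich_BR_exposing_aababbaa[OF assms(1-7)]
      not_all_rich_BR_exposing_babbaabab[OF assms(1-7)]; simp)+

text \<open>Every bound in \<open>T_closure_exponents\<close> and \<open>bad_exponents\<close> is at most 3, so it suffices to
  let each exponent be 1, 2 or at least 3.\<close>

lemma bad_exponents_cover:
  assumes "0 < n1" "0 < n2" "0 < n3" "0 < n4" "0 < n5" "0 < n6"
    and "n1 + n2 + n3 + n4 + n5 + n6 > 7" "[n1, n2, n3, n4, n5, n6] \<notin> T_closure_exponents"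
  shows "bad_exponents n1 n2 n3 n4 n5 n6 \<or> bad_exponents n6 n5 n4 n3 n2 n1"
proof -
  have cases: "n = 1 \<or> n = 2 \<or> 3 \<le> n" if "0 < n" for n :: nat
    using that by linarith
  show ?thesis
    using cases[OF assms(1)] cases[OF assms(2)] cases[OF assms(3)] cases[OF assms(4)]
      cases[OF assms(5)] cases[OF assms(6)] assms(7,8)
    unfolding T_closure_exponents_def bad_exponents_def by (elim disjE) simp_all
qed

lemma all_rich_BR_if_T_set_exponents:
  assumes "a \<noteq> b" "ns \<in> T_set_exponents"
  shows "\<forall>v\<in>BR (alt_word a b ns). rich v"
proof -
  have "list_all (\<lambda>ns. list_all (\<lambda>Bs. list_all has_new_pal_suffix (tl (prefixes (concat (rev Bs)))))
      (block_partitions (alt_word True False ns)))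
    [[1, 2, 1, 1, 2, 1], [1, 1, 1, 2, 2, 1], [1, 1, 1, 1, 2, 2], [2, 1, 1, 2, 1, 1],
     [2, 1, 1, 1, 1, 2], [1, 1, 2, 2, 1, 1]]"
    by code_simp
  then have sporadic: "\<forall>v\<in>BR (alt_word a b ns). rich v"
    if "ns \<in> set [[1, 2, 1, 1, 2, 1], [1, 1, 1, 2, 2, 1], [1, 1, 1, 1, 2, 2], [2, 1, 1, 2, 1, 1],
      [2, 1, 1, 1, 1, 2], [1, 1, 2, 2, 1, 1]]" for ns
    using that all_rich_BR_bool_word[OF assms(1), of "alt_word True False ns"]
    by (auto simp: list_all_iff map_alt_word)
  have "\<forall>v\<in>BR (alt_word a b [n, 1, 1, 1, 1, 1]). rich v" for n
    using all_rich_BR_replicate_babab[OF assms(1), of n] by simp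
  then show ?thesis using assms(2) sporadic unfolding T_set_exponents_def by auto
qed

lemma all_rich_BR_if_T_closure_exponents:
  assumes "a \<noteq> b" "ns \<in> T_closure_exponents"
  shows "\<forall>v\<in>BR (alt_word a b ns). rich v"
  using assms(2) unfolding T_closure_exponents_eq
proof
  assume "ns \<in> rev ` T_set_exponents"
  then obtain ms where "ns = rev ms" "ms \<in> T_set_exponents" by blast
  moreover have "length ms = 6" using \<open>ms \<in> T_set_exponents\<close> by (auto simp: T_set_exponents_def)
  ultimately show ?thesis
    using all_rich_BR_if_T_set_exponents[OF assms(1)[symmetric]] all_rich_BR_rev
    by (metis rev_alt_word even_numeral)
qed (rule all_rich_BR_if_T_set_exponents[OF assms(1)])

lemma not_all_rich_BR_if_not_T_closure_exponents:
  assumes "a \<noteq> b" "0 < n1" "0 < n2" "0 < n3" "0 < n4" "0 < n5" "0 < n6"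
    and "n1 + n2 + n3 + n4 + n5 + n6 > 7" "[n1, n2, n3, n4, n5, n6] \<notin> T_closure_exponents"
  shows "\<exists>v\<in>BR (alt_word a b [n1, n2, n3, n4, n5, n6]). \<not> rich v"
  using bad_exponents_cover[OF assms(2-9)]
proof
  assume "bad_exponents n6 n5 n4 n3 n2 n1"
  then have "\<exists>v\<in>BR (alt_word b a [n6, n5, n4, n3, n2, n1]). \<not> rich v"
    using assms(1-7) by (intro not_all_rich_BR_if_bad_exponents) auto
  then have "\<not> (\<forall>v\<in>BR (rev (alt_word b a [n6, n5, n4, n3, n2, n1])). rich v)"
    unfolding all_rich_BR_rev by blast
  moreover have
    "rev (alt_word b a [n6, n5, n4, n3, n2, n1]) = alt_word a b [n1, n2, n3, n4, n5, n6]"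
    by (simp add: rev_alt_word)
  ultimately show ?thesis by auto
qed (rule not_all_rich_BR_if_bad_exponents[OF assms(1-7)])

lemma all_rich_BR_alt_word_iff:
  assumes "a \<noteq> b" "\<forall>n\<in>set ns. 0 < n" "length ns = 6" "sum_list ns > 7"
  shows "(\<forall>v\<in>BR (alt_word a b ns). rich v) \<longleftrightarrow> ns \<in> T_closure_exponents"
proof -
  obtain n1 n2 n3 n4 n5 n6 where ns: "ns = [n1, n2, n3, n4, n5, n6]"
    using assms(3) by (auto simp: length_Suc_conv numeral_eq_Suc)
  have pos: "0 < n1" "0 < n2" "0 < n3" "0 < n4" "0 < n5" "0 < n6"
    and "n1 + n2 + n3 + n4 + n5 + n6 > 7"
    using assms(2,4) ns by simp_all
  then show ?thesis
    using ns all_rich_BR_if_T_closure_exponents[OF assms(1)]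
      not_all_rich_BR_if_not_T_closure_exponents[OF assms(1) pos]
    by blast
qed

lemma alt_word_in_T_closure_iff:
  assumes "a \<noteq> b" "\<forall>n\<in>set ns. 0 < n"
  shows "alt_word a b ns \<in> T_closure a b \<longleftrightarrow> ns \<in> T_closure_exponents"
    and "alt_word b a ns \<notin> T_closure a b"
proof -
  have pos: "ms \<noteq> [] \<and> (\<forall>n\<in>set ms. 0 < n)" if "ms \<in> T_closure_exponents" for ms
    using that by (auto simp: T_closure_exponents_def)
  show "alt_word a b ns \<in> T_closure a b \<longleftrightarrow> ns \<in> T_closure_exponents"
    using pos alt_word_inj[OF assms] by (auto simp: T_closure_eq[OF assms(1)])
  show "alt_word b a ns \<notin> T_closure a b"
  proof
    assume "alt_word b a ns \<in> T_closure a b"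
    then obtain ms where ms: "ms \<in> T_closure_exponents" "alt_word b a ns = alt_word a b ms"
      by (auto simp: T_closure_eq[OF assms(1)])
    then have "ns \<noteq> []" using pos[OF ms(1)] by (cases ms) auto
    then show False
      using ms pos[OF ms(1)] assms hd_alt_word[of ns b a] hd_alt_word[of ms a b] by auto
  qed
qed

theorem mainTheorem10:
  fixes a b :: 'x and w :: "'x list"
  assumes "a \<noteq> b"
    and "set w \<subseteq> {a, b}"
    and "length w > 7"
    and "runs w = 6"
  shows "(\<forall>v \<in> BR w. rich v) \<longleftrightarrow>
         (w \<in> T_closure a b \<or> compl a b w \<in> T_closure a b)"
proof -
  obtain ns where pos: "\<forall>n\<in>set ns. 0 < n" and w: "w = alt_word a b ns \<or> w = alt_word b a ns"
    using alt_word_exists[OF assms(1,2)] by blast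
  have "length ns = 6"
    using w assms(4) runs_alt_word[OF assms(1) pos] runs_alt_word[OF assms(1)[symmetric] pos]
    by auto
  moreover have "sum_list ns > 7" using w assms(3) by (auto simp: length_alt_word)
  ultimately have "(\<forall>v\<in>BR (alt_word a b ns). rich v) \<longleftrightarrow> ns \<in> T_closure_exponents"
    "(\<forall>v\<in>BR (alt_word b a ns). rich v) \<longleftrightarrow> ns \<in> T_closure_exponents"
    using all_rich_BR_alt_word_iff[OF assms(1) pos]
      all_rich_BR_alt_word_iff[OF assms(1)[symmetric] pos]
    by simp_all
  then show ?thesis
    using w alt_word_in_T_closure_iff[OF assms(1) pos] compl_alt_word[OF assms(1)] by auto
qed

end
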